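(* For $x\in(0,\pi/2)$ let $A(x)=(\cos x)(\sin x-x\cos x)^{2}(x-\cos x\sin x)$, $B(x)=(x-\cos x\sin x)^{2}(\sin x-x\cos x)$, and $C(x)=x(\sin^{2}x)(-2x^{2}\cos x+x\sin x+\cos x\sin^{2}x)$. Then for every fixed $k\geq 1$ the function $x\mapsto C(x)/(kA(x)+B(x))$ is increasing on $(0,\pi/2)$, and for all $x\in(0,\pi/2)$ $$\frac{12}{5(k+2)}<\frac{C(x)}{kA(x)+B(x)}<1.$$ *)

theory Defs
  imports "HOL-Analysis.Analysis"
begin

definition fA :: "real \<Rightarrow> real" where
  "fA x = cos x * (sin x - x * cos x)^2 * (x - cos x * sin x)"

definition fB :: "real \<Rightarrow> real" where
  "fB x = (x - cos x * sin x)^2 * (sin x - x * cos x)"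

definition fC :: "real \<Rightarrow> real" where
  "fC x = x * (sin x)^2 * (-2 * x^2 * cos x + x * sin x + cos x * (sin x)^2)"

end

theory Submission
  imports Defs "HOL-Real_Asymp.Real_Asymp"
begin

text \<open>
  Put \<open>u = sin x - x cos x\<close> and \<open>v = x - cos x sin x\<close>. Since \<open>cos x \<cdot> u + v = x sin\<^sup>2 x\<close>,
  the quotient equals \<open>\<phi> x / ((k - 1) \<psi> x + 1)\<close>, where \<open>\<phi> = (x + cos x sin x)/v - x cos x/u\<close>
  is its value for \<open>k = 1\<close> and \<open>\<psi> = cos x \<cdot> u / (x sin\<^sup>2 x)\<close>. So it suffices that \<open>\<phi>\<close> increases
  from \<open>4/5\<close> to \<open>1\<close> while \<open>\<psi>\<close> decreases from \<open>1/3\<close> and stays positive.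
  As \<open>\<psi>' = -\<phi> u v / (x\<^sup>2 sin\<^sup>3 x)\<close>, both come down to \<open>\<phi>' > 0\<close>, that is to
  \<open>8 (sin x - x cos x)\<^sup>2 (sin 2x - 2x cos 2x) < (2x - sin 2x)\<^sup>3\<close>.
  Replacing \<open>sin\<close> and \<open>cos\<close> by their degree-ten Taylor bounds turns this into a polynomial
  inequality on \<open>(0, 8/5)\<close>, and that polynomial has positive coefficients in the basis
  \<open>x\<^sup>i (8 - 5x)\<^sup>n\<^sup>-\<^sup>i\<close>.
\<close>

lemma strict_mono_on_if_DERIV_pos:
  fixes f f' :: "real \<Rightarrow> real"
  assumes "\<And>x. x \<in> {a<..<b} \<Longrightarrow> (f has_real_derivative f' x) (at x)"
    and "\<And>x. x \<in> {a<..<b} \<Longrightarrow> 0 < f' x"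
  shows "strict_mono_on {a<..<b} f"
proof (rule strict_mono_onI)
  fix x y assume xy: "x \<in> {a<..<b}" "y \<in> {a<..<b}" "x < y"
  show "f x < f y"
  proof (rule DERIV_pos_imp_increasing[OF \<open>x < y\<close>])
    fix z assume "x \<le> z" "z \<le> y"
    then have "z \<in> {a<..<b}" using xy by auto
    then show "\<exists>d. DERIV f z :> d \<and> 0 < d" using assms by blast
  qed
qed

lemma strict_antimono_on_if_DERIV_neg:
  fixes f f' :: "real \<Rightarrow> real"
  assumes "\<And>x. x \<in> {a<..<b} \<Longrightarrow> (f has_real_derivative f' x) (at x)"
    and "\<And>x. x \<in> {a<..<b} \<Longrightarrow> f' x < 0"
  shows "strict_antimono_on {a<..<b} f"
proof (rule monotone_onI)
  fix x y assume xy: "x \<in> {a<..<b}" "y \<in> {a<..<b}" "x < y"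
  show "f y < f x"
  proof (rule DERIV_neg_imp_decreasing[OF \<open>x < y\<close>])
    fix z assume "x \<le> z" "z \<le> y"
    then have "z \<in> {a<..<b}" using xy by auto
    then show "\<exists>d. DERIV f z :> d \<and> d < 0" using assms by blast
  qed
qed

lemma strict_mono_on_limit_at_right_less:
  fixes f :: "real \<Rightarrow> real"
  assumes mono: "strict_mono_on {a<..<b} f" and lim: "(f \<longlongrightarrow> L) (at_right a)"
    and x: "x \<in> {a<..<b}"
  shows "L < f x"
proof -
  define y where "y = (a + x) / 2"
  have y: "a < y" "y < x" using x unfolding y_def by auto
  have "L \<le> f y"
  proof (rule tendsto_upperbound[OF lim])
    show "\<forall>\<^sub>F z in at_right a. f z \<le> f y"
      unfolding eventually_at_right_field
      using x y by (intro exI[of _ y]) (auto intro!: less_imp_le[OF strict_mono_onD[OF mono]])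
  qed simp
  also have "f y < f x" using x y by (intro strict_mono_onD[OF mono]) auto
  finally show ?thesis .
qed

lemma strict_mono_on_less_limit_at_left:
  fixes f :: "real \<Rightarrow> real"
  assumes mono: "strict_mono_on {a<..<b} f" and lim: "(f \<longlongrightarrow> L) (at_left b)"
    and x: "x \<in> {a<..<b}"
  shows "f x < L"
proof -
  define y where "y = (x + b) / 2"
  have y: "x < y" "y < b" using x unfolding y_def by auto
  have "f x < f y" using x y by (intro strict_mono_onD[OF mono]) auto
  also have "f y \<le> L"
  proof (rule tendsto_lowerbound[OF lim])
    show "\<forall>\<^sub>F z in at_left b. f y \<le> f z"
      unfolding eventually_at_left_field
      using x y by (intro exI[of _ y]) (auto intro!: less_imp_le[OF strict_mono_onD[OF mono]])
  qed simp
  finally show ?thesis .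
qed

lemma strict_antimono_on_less_limit_at_right:
  fixes f :: "real \<Rightarrow> real"
  assumes "strict_antimono_on {a<..<b} f" and "(f \<longlongrightarrow> L) (at_right a)"
    and "x \<in> {a<..<b}"
  shows "f x < L"
proof -
  have "strict_mono_on {a<..<b} (\<lambda>z. - f z)"
    using assms(1) by (auto simp: monotone_on_def)
  from strict_mono_on_limit_at_right_less[OF this tendsto_minus[OF assms(2)] assms(3)]
  show ?thesis by simp
qed

subsection \<open>Taylor bounds and a polynomial inequality\<close>

text \<open>Degree-ten Taylor bounds for \<open>sin\<close> and \<open>cos\<close>, multiplied by \<open>10! = 3628800\<close>.\<close>

definition sin_majorant :: "real \<Rightarrow> real" where
  "sin_majorant y = 3628800*y - 604800*y^3 + 30240*y^5 - 720*y^7 + 10*y^9 + y^10"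

definition cos_minorant :: "real \<Rightarrow> real" where
  "cos_minorant y = 3628800 - 1814400*y^2 + 151200*y^4 - 5040*y^6 + 90*y^8 - y^10"

lemma sin_le_sin_majorant:
  assumes "0 \<le> y"
  shows "3628800 * sin y \<le> sin_majorant y"
proof -
  have "\<bar>sin y - (\<Sum>m<10. sin_coeff m * y ^ m)\<bar> \<le> inverse (fact 10) * \<bar>y\<bar> ^ 10"
    by (rule Maclaurin_sin_bound)
  moreover have "(\<Sum>m<10. sin_coeff m * y ^ m) = y - y^3/6 + y^5/120 - y^7/5040 + y^9/362880"
    by (simp add: lessThan_nat_numeral sin_coeff_def fact_numeral)
  moreover have "inverse (fact 10) * \<bar>y\<bar> ^ 10 = y^10 / 3628800"
    using assms by (simp add: fact_numeral)
  ultimately have "sin y - (y - y^3/6 + y^5/120 - y^7/5040 + y^9/362880) \<le> y^10 / 3628800"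
    by (metis abs_le_D1)
  then show ?thesis
    unfolding sin_majorant_def by linarith
qed

lemma cos_minorant_le_cos: "cos_minorant y \<le> 3628800 * cos y"
proof -
  obtain t where t: "cos y = (\<Sum>m<10. cos_coeff m * y ^ m) + cos (t + 5 * pi) / fact 10 * y ^ 10"
    using Maclaurin_cos_expansion[of y 10] by auto
  moreover have "(\<Sum>m<10. cos_coeff m * y ^ m) = 1 - y^2/2 + y^4/24 - y^6/720 + y^8/40320"
    by (simp add: lessThan_nat_numeral cos_coeff_def fact_numeral)
  moreover have "-1 * y ^ 10 \<le> cos (t + 5 * pi) * y ^ 10"
    by (intro mult_right_mono cos_ge_minus_one) simp
  ultimately show ?thesis
    unfolding cos_minorant_def by (simp add: fact_numeral)
qed

lemma sin_minus_mult_cos_le: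
  assumes "0 \<le> t"
  shows "3628800 * (sin t - t * cos t) \<le> sin_majorant t - t * cos_minorant t"
  using sin_le_sin_majorant[OF assms] mult_left_mono[OF cos_minorant_le_cos[of t] assms]
  by (simp add: algebra_simps)

text \<open>\<open>binary_form [c\<^sub>0, \<dots>, c\<^sub>n] a b = \<Sum>\<^sub>i c\<^sub>i a\<^sup>i b\<^sup>n\<^sup>-\<^sup>i\<close>, in Horner form.\<close>

fun binary_form :: "real list \<Rightarrow> real \<Rightarrow> real \<Rightarrow> real" where
  "binary_form [] a b = 0"
| "binary_form (c # cs) a b = c * b ^ length cs + a * binary_form cs a b"

lemma binary_form_nonneg:
  assumes "0 \<le> a" "0 \<le> b" "\<forall>c\<in>set cs. 0 \<le> c"
  shows "0 \<le> binary_form cs a b"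
  using assms(3) by (induction cs) (simp_all add: assms(1,2))

lemma binary_form_pos:
  assumes "0 < a" "0 < b" "\<forall>c\<in>set cs. 0 \<le> c" "\<exists>c\<in>set cs. 0 < c"
  shows "0 < binary_form cs a b"
  using assms(3,4)
proof (induction cs)
  case (Cons c cs)
  show ?case
  proof (cases "0 < c")
    case True
    then have "0 < c * b ^ length cs" using assms(2) by simp
    moreover have "0 \<le> a * binary_form cs a b"
      using Cons.prems(1) assms(1,2) by (simp add: binary_form_nonneg)
    ultimately show ?thesis by simp
  next
    case False
    then have "0 < a * binary_form cs a b" using Cons assms(1) by simp
    moreover have "0 \<le> c * b ^ length cs" using Cons.prems(1) assms(2) by simp
    ultimately show ?thesis by simp
  qed
qed simp

lemma sin_majorant_double_less:
  assumes "0 < x" "x < 8/5"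
  shows "sin_majorant (2 * x) < 7257600 * x"
proof -
  have eq: "2048 * (7257600 * x - sin_majorant (2 * x)) = x^3 * binary_form
      [4725, 165375, 2420145, 19159875, 88608015, 240007725, 354134155, 217569873] x (8 - 5 * x)"
    unfolding sin_majorant_def by simp algebra
  have "0 < 2048 * (7257600 * x - sin_majorant (2 * x))"
    unfolding eq using assms by (intro mult_pos_pos binary_form_pos) auto
  then show ?thesis by simp
qed

lemma majorant_double_angle_inequality:
  assumes "0 < x" "x < 8/5"
  shows "8 * (sin_majorant x - x * cos_minorant x)^2 * (sin_majorant (2*x) - 2*x * cos_minorant (2*x))
    < (7257600 * x - sin_majorant (2*x))^3"
proof -
  define cs :: "real list" where "cs =
    [602791875, 60279187500, 2845258022250, 84267513421875, 1755856103951250,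
     27354434049621000, 330524052301170000, 3171126278439800100, 24529694809207894650,
     154454540823824958000, 795803826007562314500, 3360182929317887069250,
     11603697102715720745160, 32584367289892301671320, 73652758524731588401440,
     131892250845166499704900, 182630002295032209572075, 188334360781962904363652,
     135956105832106783877538, 61192135473511967113635, 12896653213166905653246]"
  have eq: "268435456 * ((7257600 * x - sin_majorant (2*x))^3
      - 8 * (sin_majorant x - x * cos_minorant x)^2 * (sin_majorant (2*x) - 2*x * cos_minorant (2*x)))
    = x^13 * binary_form cs x (8 - 5 * x)"
    unfolding sin_majorant_def cos_minorant_def cs_def by simp algebra
  have "0 < 268435456 * ((7257600 * x - sin_majorant (2*x))^3
      - 8 * (sin_majorant x - x * cos_minorant x)^2 * (sin_majorant (2*x) - 2*x * cos_minorant (2*x)))"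
    unfolding eq cs_def using assms by (intro mult_pos_pos binary_form_pos) auto
  then show ?thesis by simp
qed

lemma pi_half_less_8_5: "pi / 2 < 8 / 5"
  using pi_approx by simp

lemma sin_minus_mult_cos_pos:
  assumes "0 < t" "t < pi"
  shows "0 < sin t - t * cos t"
proof -
  have "(\<lambda>z. sin z - z * cos z) 0 < (\<lambda>z. sin z - z * cos z) t"
  proof (rule DERIV_pos_imp_increasing_open[OF assms(1)])
    fix z :: real assume "0 < z" "z < t"
    then have "0 < z * sin z" using sin_gt_zero[of z] assms by simp
    moreover have "DERIV (\<lambda>z. sin z - z * cos z) z :> z * sin z"
      by (auto intro!: derivative_eq_intros simp: algebra_simps)
    ultimately show "\<exists>y. DERIV (\<lambda>z. sin z - z * cos z) z :> y \<and> 0 < y" by blast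
  qed (intro continuous_intros)
  then show ?thesis by simp
qed

lemma x_minus_cos_mult_sin_pos:
  assumes "0 < x" "x < pi / 2"
  shows "0 < x - cos x * sin x"
proof -
  have "3628800 * sin (2 * x) < 7257600 * x"
    using sin_le_sin_majorant[of "2 * x"] sin_majorant_double_less[of x] assms pi_half_less_8_5
    by linarith
  then show ?thesis using sin_double[of x] by (simp add: mult.commute)
qed

lemma double_angle_inequality:
  assumes "0 < x" "x < pi / 2"
  shows "8 * (sin x - x * cos x)^2 * (sin (2*x) - 2*x * cos (2*x)) < (2*x - sin (2*x))^3"
proof -
  have x: "x < 8/5" using assms pi_half_less_8_5 by linarith
  have J1: "0 < sin x - x * cos x" and J2: "0 < sin (2*x) - 2*x * cos (2*x)"
    using sin_minus_mult_cos_pos[of x] sin_minus_mult_cos_pos[of "2*x"] assms by simp_all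
  have "3628800^3 * (8 * (sin x - x * cos x)^2 * (sin (2*x) - 2*x * cos (2*x)))
      = 8 * (3628800 * (sin x - x * cos x))^2 * (3628800 * (sin (2*x) - 2*x * cos (2*x)))"
    by algebra
  also have "\<dots> \<le> 8 * (sin_majorant x - x * cos_minorant x)^2 * (sin_majorant (2*x) - 2*x * cos_minorant (2*x))"
    using J1 J2 assms sin_minus_mult_cos_le[of x] sin_minus_mult_cos_le[of "2*x"]
    by (intro mult_left_mono mult_mono power_mono) auto
  also have "\<dots> < (7257600 * x - sin_majorant (2*x))^3"
    using majorant_double_angle_inequality[OF assms(1) x] .
  also have "\<dots> \<le> (3628800 * (2*x - sin (2*x)))^3"
    using sin_majorant_double_less[OF assms(1) x] sin_le_sin_majorant[of "2*x"] assms
    by (intro power_mono) auto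
  also have "\<dots> = 3628800^3 * (2*x - sin (2*x))^3"
    by algebra
  finally show ?thesis by simp
qed

subsection \<open>The functions \<open>\<phi>\<close> and \<open>\<psi>\<close>\<close>

definition phi :: "real \<Rightarrow> real" where
  "phi x = (x + cos x * sin x) / (x - cos x * sin x) - x * cos x / (sin x - x * cos x)"

definition psi :: "real \<Rightarrow> real" where
  "psi x = cos x * (sin x - x * cos x) / (x * (sin x)^2)"

lemma phi_mult_eq:
  assumes "sin x - x * cos x \<noteq> 0" "x - cos x * sin x \<noteq> 0"
  shows "phi x * ((sin x - x * cos x) * (x - cos x * sin x))
    = x * sin x + cos x * (sin x)^2 - 2 * x^2 * cos x"
proof -
  have "(a / v - b / u) * (u * v) = a * u - b * v" if "u \<noteq> 0" "v \<noteq> 0" for a b u v :: real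
    using that by (simp add: field_simps)
  from this[OF assms, of "x + cos x * sin x" "x * cos x"]
  have "phi x * ((sin x - x * cos x) * (x - cos x * sin x))
      = (x + cos x * sin x) * (sin x - x * cos x) - x * cos x * (x - cos x * sin x)"
    unfolding phi_def .
  also have "\<dots> = x * sin x + cos x * (sin x)^2 - 2 * x^2 * cos x"
    by (simp add: algebra_simps power2_eq_square)
  finally show ?thesis .
qed

lemma phi_has_real_derivative:
  assumes "sin x - x * cos x \<noteq> 0" "x - cos x * sin x \<noteq> 0"
  shows "(phi has_real_derivative
    ((2*x - sin (2*x))^3 - 8 * (sin x - x * cos x)^2 * (sin (2*x) - 2*x * cos (2*x)))
      / (8 * (sin x - x * cos x)^2 * (x - cos x * sin x)^2)) (at x)"
  unfolding phi_def[abs_def] using assms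
  apply (auto intro!: derivative_eq_intros)
  using assms apply (simp add: divide_simps sin_double cos_double)
  using sin_cos_squared_add[of x] by algebra

lemma psi_has_real_derivative:
  assumes "x \<noteq> 0" "sin x \<noteq> 0"
  shows "(psi has_real_derivative
    (2 * x^2 * cos x - x * sin x - cos x * (sin x)^2) / (x^2 * (sin x)^3)) (at x)"
  unfolding psi_def[abs_def] using assms
  apply (auto intro!: derivative_eq_intros)
  using assms apply (simp add: divide_simps)
  using sin_cos_squared_add[of x] by algebra

lemma phi_strict_mono: "strict_mono_on {0<..<pi/2} phi"
proof (rule strict_mono_on_if_DERIV_pos[OF phi_has_real_derivative])
  fix x assume "x \<in> {0<..<pi/2}"
  then have x: "0 < x" "x < pi/2" by auto
  have "0 < sin x - x * cos x" "0 < x - cos x * sin x"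
    using sin_minus_mult_cos_pos[of x] x_minus_cos_mult_sin_pos[OF x] x by auto
  then show "0 < ((2*x - sin (2*x))^3 - 8 * (sin x - x * cos x)^2 * (sin (2*x) - 2*x * cos (2*x)))
      / (8 * (sin x - x * cos x)^2 * (x - cos x * sin x)^2)"
    using double_angle_inequality[OF x] by (intro divide_pos_pos) auto
qed (use sin_minus_mult_cos_pos x_minus_cos_mult_sin_pos in \<open>fastforce+\<close>)

lemma phi_tendsto_at_right_0: "(phi \<longlongrightarrow> 4/5) (at_right 0)"
  unfolding phi_def[abs_def] by real_asymp

lemma phi_greater: "x \<in> {0<..<pi/2} \<Longrightarrow> 4/5 < phi x"
  by (rule strict_mono_on_limit_at_right_less[OF phi_strict_mono phi_tendsto_at_right_0])

lemma phi_less_one: "x \<in> {0<..<pi/2} \<Longrightarrow> phi x < 1"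
proof (rule strict_mono_on_less_limit_at_left[OF phi_strict_mono])
  have "isCont phi (pi/2)"
    unfolding phi_def[abs_def] by (intro continuous_intros) (use pi_gt_zero in auto)
  moreover have "phi (pi/2) = 1"
    unfolding phi_def using pi_gt_zero by simp
  ultimately show "(phi \<longlongrightarrow> 1) (at_left (pi/2))"
    unfolding isCont_def by (metis filterlim_at_split)
qed

lemma psi_strict_antimono: "strict_antimono_on {0<..<pi/2} psi"
proof (rule strict_antimono_on_if_DERIV_neg[OF psi_has_real_derivative])
  fix x assume "x \<in> {0<..<pi/2}"
  then have x: "0 < x" "x < pi/2" by auto
  have u: "0 < sin x - x * cos x" and v: "0 < x - cos x * sin x"
    using sin_minus_mult_cos_pos[of x] x_minus_cos_mult_sin_pos[OF x] x by auto
  have "0 < phi x * ((sin x - x * cos x) * (x - cos x * sin x))"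
    using phi_greater[of x] x u v by simp
  then have "2 * x^2 * cos x - x * sin x - cos x * (sin x)^2 < 0"
    using phi_mult_eq[of x] u v by simp
  then show "(2 * x^2 * cos x - x * sin x - cos x * (sin x)^2) / (x^2 * (sin x)^3) < 0"
    using x sin_gt_zero[of x] by (intro divide_neg_pos) auto
qed (use sin_gt_zero in fastforce)+

lemma psi_pos: "x \<in> {0<..<pi/2} \<Longrightarrow> 0 < psi x"
  unfolding psi_def
  using sin_minus_mult_cos_pos[of x] sin_gt_zero[of x] cos_gt_zero_pi[of x] by auto

lemma psi_tendsto_at_right_0: "(psi \<longlongrightarrow> 1/3) (at_right 0)"
  unfolding psi_def[abs_def] by real_asymp

lemma psi_less: "x \<in> {0<..<pi/2} \<Longrightarrow> psi x < 1/3"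
  by (rule strict_antimono_on_less_limit_at_right[OF psi_strict_antimono psi_tendsto_at_right_0])

lemma fC_div_eq:
  assumes "x \<in> {0<..<pi/2}"
  shows "fC x / (k * fA x + fB x) = phi x / ((k - 1) * psi x + 1)"
proof -
  define u v where "u = sin x - x * cos x" and "v = x - cos x * sin x"
  have x: "0 < x" "x < pi/2" using assms by auto
  have uv: "u \<noteq> 0" "v \<noteq> 0"
    using sin_minus_mult_cos_pos[of x] x_minus_cos_mult_sin_pos[OF x] x unfolding u_def v_def by auto
  have w: "x * (sin x)^2 \<noteq> 0" using x sin_gt_zero[of x] by simp
  have psi: "psi x * (x * (sin x)^2) = cos x * u"
    unfolding psi_def u_def using w by simp
  have "cos x * u + v = x * (sin x)^2"
    unfolding u_def v_def using sin_cos_squared_add[of x] by algebra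
  then have "(x * (sin x)^2) * ((k - 1) * psi x + 1) = k * cos x * u + v"
    using psi by (simp add: algebra_simps)
  moreover have "k * fA x + fB x = u * v * (k * cos x * u + v)"
    unfolding fA_def fB_def u_def v_def by (simp add: algebra_simps power2_eq_square)
  ultimately have denom: "k * fA x + fB x = (x * (sin x)^2) * (u * v * ((k - 1) * psi x + 1))"
    by simp
  have "fC x = (x * (sin x)^2) * (x * sin x + cos x * (sin x)^2 - 2 * x^2 * cos x)"
    unfolding fC_def by (simp add: algebra_simps)
  then have numer: "fC x = (x * (sin x)^2) * (phi x * (u * v))"
    using phi_mult_eq[of x] uv unfolding u_def v_def by simp
  show ?thesis
    unfolding numer denom using uv w by simp
qed

lemma denominator_bounds:
  assumes "1 \<le> k" "x \<in> {0<..<pi/2}"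
  shows "1 \<le> (k - 1) * psi x + 1" "(k - 1) * psi x + 1 \<le> (k + 2) / 3"
  using psi_pos[OF assms(2)] psi_less[OF assms(2)] assms(1) mult_left_mono[of "psi x" "1/3" "k - 1"]
  by auto

lemma phi_div_denominator_strict_mono:
  assumes "1 \<le> k"
  shows "strict_mono_on {0<..<pi/2} (\<lambda>x. phi x / ((k - 1) * psi x + 1))"
proof (rule strict_mono_onI)
  fix x y assume x: "x \<in> {0<..<pi/2}" and y: "y \<in> {0<..<pi/2}" and "x < y"
  show "phi x / ((k - 1) * psi x + 1) < phi y / ((k - 1) * psi y + 1)"
  proof (rule frac_less)
    show "0 \<le> phi x" using phi_greater[OF x] by simp
    show "phi x < phi y" using strict_mono_onD[OF phi_strict_mono x y \<open>x < y\<close>] .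
    show "0 < (k - 1) * psi y + 1" using denominator_bounds(1)[OF assms y] by simp
    show "(k - 1) * psi y + 1 \<le> (k - 1) * psi x + 1"
      using monotone_onD[OF psi_strict_antimono x y \<open>x < y\<close>] assms by (simp add: mult_left_mono)
  qed
qed

lemma phi_div_denominator_bounds:
  assumes "1 \<le> k" "x \<in> {0<..<pi/2}"
  shows "12 / (5 * (k + 2)) < phi x / ((k - 1) * psi x + 1)"
    and "phi x / ((k - 1) * psi x + 1) < 1"
proof -
  have "12 / (5 * (k + 2)) = (4/5) / ((k + 2) / 3)" by simp
  also have "\<dots> < phi x / ((k - 1) * psi x + 1)"
    using phi_greater[OF assms(2)] denominator_bounds[OF assms] by (intro frac_less) auto
  finally show "12 / (5 * (k + 2)) < phi x / ((k - 1) * psi x + 1)" .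
  show "phi x / ((k - 1) * psi x + 1) < 1"
    using phi_less_one[OF assms(2)] denominator_bounds[OF assms] by (simp add: divide_less_eq)
qed

theorem lemma2p1:
  fixes k :: real
  assumes "k \<ge> 1"
  shows "strict_mono_on {0<..<pi/2} (\<lambda>x. fC x / (k * fA x + fB x))
    \<and> (\<forall>x\<in>{0<..<pi/2}. 12 / (5 * (k + 2)) < fC x / (k * fA x + fB x)
                           \<and> fC x / (k * fA x + fB x) < 1)"
proof -
  have "strict_mono_on {0<..<pi/2} (\<lambda>x. fC x / (k * fA x + fB x))"
    using phi_div_denominator_strict_mono[OF assms] by (simp add: monotone_on_def fC_div_eq)
  then show ?thesis
    using phi_div_denominator_bounds[OF assms] by (simp add: fC_div_eq)
qed

end
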